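(* Let $R_1>1$ be an odd integer, $R_2>1$ an odd squarefree integer with $\gcd(R_1,R_2)=1$, $N=R_1R_2$, and let $\chi(n)=\left(\frac{n}{R_1R_2}\right)$ be the Jacobi symbol. Then the $R_1\times R_2$ finite Zak transform of $\chi$ is $$X_{R_2}(j,k)=c_{R_2}\left(\frac{R_1}{R_2}\right)e^{-2\pi i\frac{R_1^{-1}jk}{R_2}}\left(\frac{j}{R_2}\right)\left(\frac{k}{R_1}\right),\qquad 0\le j<R_2,\ 0\le k<R_1,$$ where $R_1^{-1}$ is the inverse of $R_1$ modulo $R_2$ and $c_{R_2}=\sum_{b=0}^{R_2-1}\left(\frac{b}{R_2}\right)e^{2\pi i b/R_2}$.
   Context: $\left(\frac{a}{M}\right)$ denotes the Jacobi symbol for odd positive $M$ (zero when $\gcd(a,M)>1$). For $N=LM$ and an $N$-periodic sequence $x$, the finite Zak transform is $X_L(j,k)=\sum_{r=0}^{L-1}x(k+rM)e^{2\pi i rj/L}$, $0\le j<L$, $0\le k<M$; here $L=R_2$, $M=R_1$. *)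

theory Defs
  imports "HOL-Analysis.Analysis" "HOL-Number_Theory.Number_Theory" "HOL-Computational_Algebra.Squarefree"
begin

definition jacobi :: "int \<Rightarrow> int \<Rightarrow> int" where
  "jacobi a M = (\<Prod>p\<in>prime_factors M. Legendre a p ^ multiplicity p M)"

definition zak :: "(int \<Rightarrow> complex) \<Rightarrow> int \<Rightarrow> int \<Rightarrow> int \<Rightarrow> int \<Rightarrow> complex" where
  "zak x L M j k = (\<Sum>r\<in>{0..<L}. x (k + r * M) * exp (2 * pi * \<i> * of_int (r * j) / of_int L))"

definition inv_mod :: "int \<Rightarrow> int \<Rightarrow> int" where
  "inv_mod a m = (SOME u. [a * u = 1] (mod m))"

definition gauss_c :: "int \<Rightarrow> complex" where
  "gauss_c L = (\<Sum>b\<in>{0..<L}. of_int (jacobi b L) * exp (2 * pi * \<i> * of_int b / of_int L))"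

end

theory Submission
  imports Defs
begin

(* As r runs over 0..<R2, the numbers n = k + r R1 run over a full residue system modulo R2
   while staying congruent to k modulo R1, so the Jacobi symbol factors as (k/R1)(n/R2).
   Writing v for the inverse of R1 modulo R2, the phase is e(rj/R2) = e(-vjk/R2) e(vjn/R2),
   so the Zak transform is (k/R1) e(-vjk/R2) times the twisted Gauss sum
   G(a) = sum_n (n/R2) e(an/R2) at a = vj.  For squarefree R2 one has G(a) = (a/R2) G(1):
   the substitution n -> un with u a unit gives G(a) = (u/R2) G(au); for a coprime to R2
   take u = 1/a, and otherwise a prime p divides a and R2, and a unit u with (u/R2) = -1
   and u = 1 modulo R2/p (it exists because p^2 does not divide R2) satisfies au = a, so
   G(a) = -G(a) = 0. *)

lemma Legendre_cong:
  assumes "[a = b] (mod p)"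
  shows "Legendre a p = Legendre b p"
proof -
  have "[a = 0] (mod p) \<longleftrightarrow> [b = 0] (mod p)" "QuadRes p a \<longleftrightarrow> QuadRes p b"
    using assms unfolding QuadRes_def by (meson cong_sym cong_trans)+
  thus ?thesis unfolding Legendre_def by simp
qed

lemma Legendre_cases: "Legendre a p \<in> {-1, 0, 1}"
  unfolding Legendre_def by auto

lemma cong_sign_values_imp_eq:
  fixes x y p :: int
  assumes "x \<in> {-1, 0, 1}" "y \<in> {-1, 0, 1}" "[x = y] (mod p)" "p > 2"
  shows "x = y"
proof -
  have "p dvd x - y" using assms(3) by (simp add: cong_iff_dvd_diff)
  moreover have "\<bar>x - y\<bar> < \<bar>p\<bar>" using assms(1,2,4) by auto
  ultimately show ?thesis using dvd_imp_le_int[of "x - y" p] by fastforce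
qed

lemma odd_prime_int_cases:
  fixes p :: int
  assumes "prime p" "p > 2"
  obtains n where "p = int n" "prime n" "n > 2"
proof (rule that[of "nat p"])
  show "p = int (nat p)" "nat p > 2" using assms(2) by simp_all
  show "prime (nat p)" using assms(1) prime_int_nat_transfer by blast
qed

lemma Legendre_mult:
  fixes p :: int
  assumes "prime p" "p > 2"
  shows "Legendre (a * b) p = Legendre a p * Legendre b p"
proof -
  obtain n where n: "p = int n" "prime n" "n > 2" using odd_prime_int_cases assms .
  let ?e = "(n - 1) div 2"
  have "[Legendre (a * b) p = (a * b) ^ ?e] (mod p)"
    and "[Legendre a p * Legendre b p = a ^ ?e * b ^ ?e] (mod p)"
    using euler_criterion[OF n(2,3)] cong_mult n(1) by blast+
  hence "[Legendre (a * b) p = Legendre a p * Legendre b p] (mod p)"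
    by (metis cong_sym cong_trans power_mult_distrib)
  moreover have "Legendre a p * Legendre b p \<in> {-1, 0, 1}"
    using Legendre_cases[of a p] Legendre_cases[of b p] by auto
  ultimately show ?thesis using cong_sign_values_imp_eq Legendre_cases assms(2) by blast
qed

text \<open>A primitive root is a non-residue, since by Euler's criterion the Legendre symbol of a
  residue g is g^((p-1)/2) = 1, while a primitive root has order p - 1.\<close>
lemma Legendre_nonresidue_exists:
  fixes p :: int
  assumes "prime p" "p > 2"
  obtains g where "Legendre g p = -1"
proof -
  obtain n where n: "p = int n" "prime n" "n > 2" using odd_prime_int_cases assms .
  obtain g where "residue_primroot n g"
    using prime_primitive_root_exists[of n] n(2) prime_gt_1_nat by blast
  hence g: "coprime n g" "ord n g = n - 1"
    using n(2) by (simp_all add: residue_primroot_def totient_prime)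
  have "Legendre (int g) p = -1"
  proof (rule ccontr)
    assume "Legendre (int g) p \<noteq> -1"
    moreover have "\<not> [int g = 0] (mod p)"
      using g(1) n(1,2) by (metis cong_0_iff coprime_absorb_left not_prime_unit of_nat_dvd_iff)
    ultimately have "Legendre (int g) p = 1" unfolding Legendre_def by presburger
    hence "[int g ^ ((n - 1) div 2) = 1] (mod p)"
      using euler_criterion[OF n(2,3), of "int g"] n(1) by (simp add: cong_sym)
    hence "ord n g dvd (n - 1) div 2"
      using cong_int_iff n(1) of_nat_1 of_nat_power ord_divides by metis
    hence "n - 1 \<le> (n - 1) div 2" using g(2) n(3) by (intro dvd_imp_le) auto
    thus False using n(3) by presburger
  qed
  thus thesis ..
qed

lemma prime_factor_of_odd_gt_2:
  fixes M p :: int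
  assumes "p \<in> prime_factors M" "odd M"
  shows "p > 2"
proof -
  have "prime p" "p dvd M" using assms(1) by auto
  hence "p \<noteq> 2" "p \<ge> 2" using assms(2) prime_ge_2_int by auto
  thus ?thesis by simp
qed

lemma not_coprime_primeE:
  fixes a M :: int
  assumes "\<not> coprime a M" "M \<noteq> 0"
  obtains p where "prime p" "p dvd a" "p dvd M"
proof -
  obtain c where c: "c dvd a" "c dvd M" "\<not> is_unit c" using not_coprimeE assms(1) by blast
  have "c \<noteq> 0" using c(2) assms(2) by auto
  then obtain p where "p dvd c" "prime p" using prime_divisor_exists c(3) by blast
  thus thesis using that c dvd_trans by blast
qed

lemma jacobi_cong:
  assumes "[a = b] (mod M)"
  shows "jacobi a M = jacobi b M"
  unfolding jacobi_def
proof (rule prod.cong[OF refl])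
  fix p assume "p \<in> prime_factors M"
  hence "[a = b] (mod p)" using assms cong_dvd_modulus by blast
  thus "Legendre a p ^ multiplicity p M = Legendre b p ^ multiplicity p M"
    by (simp add: Legendre_cong)
qed

lemma jacobi_mult:
  assumes "odd M"
  shows "jacobi (a * b) M = jacobi a M * jacobi b M"
  unfolding jacobi_def prod.distrib[symmetric]
proof (rule prod.cong[OF refl])
  fix p assume "p \<in> prime_factors M"
  hence "Legendre (a * b) p = Legendre a p * Legendre b p"
    using Legendre_mult prime_factor_of_odd_gt_2 assms by blast
  thus "Legendre (a * b) p ^ multiplicity p M
      = Legendre a p ^ multiplicity p M * Legendre b p ^ multiplicity p M"
    by (simp add: power_mult_distrib)
qed

lemma jacobi_one_left [simp]: "jacobi 1 M = 1"
  unfolding jacobi_def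
proof (rule prod.neutral, rule ballI)
  fix p assume "p \<in> prime_factors M"
  hence "prime p" by auto
  hence "\<not> [1 = 0] (mod p)" by (auto simp: cong_0_iff not_prime_unit)
  moreover have "QuadRes p 1" unfolding QuadRes_def by (rule exI[of _ 1]) simp
  ultimately show "Legendre 1 p ^ multiplicity p M = 1" unfolding Legendre_def by simp
qed

lemma jacobi_prime_modulus:
  fixes p :: int
  assumes "prime p"
  shows "jacobi a p = Legendre a p"
proof -
  have "multiplicity p p = 1" using assms by (intro multiplicity_self) (auto simp: not_prime_unit)
  thus ?thesis unfolding jacobi_def prime_prime_factors[OF assms] by simp
qed

text \<open>No coprimality is needed: the multiplicities of the prime factors simply add up.\<close>
lemma jacobi_mult_modulus:
  fixes M1 M2 :: int
  assumes "M1 \<noteq> 0" "M2 \<noteq> 0"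
  shows "jacobi a (M1 * M2) = jacobi a M1 * jacobi a M2"
proof -
  let ?P = "prime_factors M1 \<union> prime_factors M2"
  have vanish: "Legendre a p ^ multiplicity p M = 1"
    if "p \<in> ?P - prime_factors M" "M \<noteq> 0" for p M
    using that by (auto simp: in_prime_factors_iff not_dvd_imp_multiplicity_0)
  have "multiplicity p (M1 * M2) = multiplicity p M1 + multiplicity p M2" if "p \<in> ?P" for p
    using that assms by (auto intro: prime_elem_multiplicity_mult_distrib prime_imp_prime_elem)
  hence "jacobi a (M1 * M2)
      = (\<Prod>p\<in>?P. Legendre a p ^ multiplicity p M1 * Legendre a p ^ multiplicity p M2)"
    unfolding jacobi_def prime_factors_product[OF assms] by (simp add: power_add)
  also have "\<dots> = (\<Prod>p\<in>?P. Legendre a p ^ multiplicity p M1)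
                  * (\<Prod>p\<in>?P. Legendre a p ^ multiplicity p M2)"
    by (rule prod.distrib)
  also have "(\<Prod>p\<in>?P. Legendre a p ^ multiplicity p M1) = jacobi a M1"
    unfolding jacobi_def using vanish assms(1) by (intro prod.mono_neutral_right) auto
  also have "(\<Prod>p\<in>?P. Legendre a p ^ multiplicity p M2) = jacobi a M2"
    unfolding jacobi_def using vanish assms(2) by (intro prod.mono_neutral_right) auto
  finally show ?thesis .
qed

lemma jacobi_eq_0_if_not_coprime:
  fixes a M :: int
  assumes "\<not> coprime a M" "M \<noteq> 0"
  shows "jacobi a M = 0"
proof -
  obtain p where p: "prime p" "p dvd a" "p dvd M" using not_coprime_primeE assms .
  hence "p \<in> prime_factors M" "multiplicity p M > 0"
    using assms(2) by (auto simp: in_prime_factors_iff multiplicity_gt_zero_iff not_prime_unit)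
  moreover have "Legendre a p = 0" unfolding Legendre_def using p(2) by (simp add: cong_0_iff)
  ultimately show ?thesis unfolding jacobi_def by (auto intro: prod_zero)
qed

lemma jacobi_inverse:
  assumes "odd M" "[a * w = 1] (mod M)"
  shows "jacobi w M = jacobi a M"
proof -
  have "jacobi a M * jacobi w M = 1"
    using jacobi_mult[OF assms(1)] jacobi_cong[OF assms(2)] by simp
  thus ?thesis using zmult_eq_1_iff by auto
qed

text \<open>Here squarefreeness is essential: u is obtained by the Chinese remainder theorem from a
  non-residue modulo p and 1 modulo L/p, which needs p coprime to L/p.\<close>
lemma jacobi_minus_one_cong_1_exists:
  fixes L p :: int
  assumes "L > 0" "odd L" "squarefree L" "prime p" "p dvd L"
  obtains u where "jacobi u L = -1" "[u = 1] (mod L div p)"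
proof -
  define m where "m = L div p"
  have L: "L = p * m" using assms(5) unfolding m_def by simp
  have "p > 0" "m \<noteq> 0" using assms(1,4) L prime_gt_0_int by auto
  have "p > 2"
    using prime_factor_of_odd_gt_2[of p L] assms by (simp add: in_prime_factors_iff)
  then obtain g where g: "Legendre g p = -1" using Legendre_nonresidue_exists assms(4) by blast
  have "\<not> p dvd m"
  proof
    assume "p dvd m"
    hence "p ^ 2 dvd L" using L by (simp add: power2_eq_square)
    thus False using squarefreeD[OF assms(3)] assms(4) not_prime_unit by blast
  qed
  hence "coprime p m" using assms(4) prime_imp_coprime by blast
  then obtain u where u: "[u = g] (mod p)" "[u = 1] (mod m)"
    using binary_chinese_remainder_int by blast
  have "jacobi u L = jacobi u p * jacobi u m"
    unfolding L using jacobi_mult_modulus \<open>p > 0\<close> \<open>m \<noteq> 0\<close> by simp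
  also have "\<dots> = -1"
    using jacobi_prime_modulus[OF assms(4)] Legendre_cong[OF u(1)] g jacobi_cong[OF u(2)] by simp
  finally show thesis using that u(2) m_def by blast
qed

definition unity_root :: "int \<Rightarrow> int \<Rightarrow> complex" where
  "unity_root L x = exp (2 * pi * \<i> * of_int x / of_int L)"

lemma unity_root_add: "unity_root L (x + y) = unity_root L x * unity_root L y"
  unfolding unity_root_def by (simp add: exp_add[symmetric] add_divide_distrib distrib_left)

lemma unity_root_mult_self: "unity_root L (L * t) = 1"
proof (cases "L = 0")
  case False
  hence "2 * pi * \<i> * of_int (L * t) / of_int L = (2 * of_int t * pi) * \<i>"
    by (simp add: field_simps)
  thus ?thesis unfolding unity_root_def using exp_integer_2pi[of "of_int t"] by simp
qed (simp add: unity_root_def)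

lemma unity_root_cong:
  assumes "[x = y] (mod L)"
  shows "unity_root L x = unity_root L y"
proof -
  obtain t where "x = y + L * t" using assms by (metis cong_iff_lin cong_sym)
  thus ?thesis by (simp add: unity_root_add unity_root_mult_self)
qed

lemma sum_residues_affine_reindex:
  fixes f :: "int \<Rightarrow> 'a::comm_monoid_add" and L u k :: int
  assumes "L > 0" "coprime u L" "\<And>a b. [a = b] (mod L) \<Longrightarrow> f a = f b"
  shows "(\<Sum>r\<in>{0..<L}. f (k + r * u)) = (\<Sum>b\<in>{0..<L}. f b)"
proof -
  define h where "h r = (k + r * u) mod L" for r
  have inj: "inj_on h {0..<L}"
  proof (rule inj_onI)
    fix r s assume r: "r \<in> {0..<L}" and s: "s \<in> {0..<L}" and eq: "h r = h s"
    from eq have "[k + r * u = k + s * u] (mod L)" unfolding h_def cong_def .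
    hence "[r * u = s * u] (mod L)" by (simp only: cong_add_lcancel)
    hence "[r = s] (mod L)" using cong_mult_rcancel[OF assms(2)] by blast
    thus "r = s" using r s cong_less_imp_eq_int[of r L s] by simp
  qed
  have "h ` {0..<L} \<subseteq> {0..<L}" using assms(1) by (auto simp: h_def)
  hence "h ` {0..<L} = {0..<L}" using inj by (simp add: endo_inj_surj)
  with inj have "bij_betw h {0..<L} {0..<L}" unfolding bij_betw_def ..
  hence "(\<Sum>b\<in>{0..<L}. f b) = (\<Sum>r\<in>{0..<L}. f (h r))"
    by (rule sum.reindex_bij_betw[symmetric])
  also have "\<dots> = (\<Sum>r\<in>{0..<L}. f (k + r * u))"
    unfolding h_def by (intro sum.cong refl assms(3)) (simp add: cong_def)
  finally show ?thesis by simp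
qed

definition jacobi_gauss_sum :: "int \<Rightarrow> int \<Rightarrow> complex" where
  "jacobi_gauss_sum L a = (\<Sum>b\<in>{0..<L}. of_int (jacobi b L) * unity_root L (a * b))"

lemma gauss_c_eq_jacobi_gauss_sum: "gauss_c L = jacobi_gauss_sum L 1"
  unfolding gauss_c_def jacobi_gauss_sum_def unity_root_def by simp

lemma jacobi_gauss_sum_cong:
  assumes "[a = a'] (mod L)"
  shows "jacobi_gauss_sum L a = jacobi_gauss_sum L a'"
  unfolding jacobi_gauss_sum_def
  using unity_root_cong[OF cong_scalar_right[OF assms]] by simp

lemma jacobi_gauss_sum_scale:
  assumes "L > 0" "odd L" "coprime u L"
  shows "jacobi_gauss_sum L a = of_int (jacobi u L) * jacobi_gauss_sum L (a * u)"
proof -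
  define f where "f b = of_int (jacobi b L) * unity_root L (a * b)" for b
  have "f b = f b'" if "[b = b'] (mod L)" for b b'
    unfolding f_def using jacobi_cong[OF that] unity_root_cong[OF cong_scalar_left[OF that]] by simp
  hence "jacobi_gauss_sum L a = (\<Sum>r\<in>{0..<L}. f (0 + r * u))"
    unfolding jacobi_gauss_sum_def f_def[symmetric]
    using sum_residues_affine_reindex[OF assms(1,3)] by metis
  also have "\<dots> = of_int (jacobi u L) * jacobi_gauss_sum L (a * u)"
    unfolding f_def jacobi_gauss_sum_def
    by (simp add: jacobi_mult[OF assms(2)] sum_distrib_left ac_simps)
  finally show ?thesis .
qed

lemma jacobi_gauss_sum_eq:
  assumes "L > 0" "odd L" "squarefree L"
  shows "jacobi_gauss_sum L a = of_int (jacobi a L) * gauss_c L"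
proof (cases "coprime a L")
  case True
  then obtain w where w: "[a * w = 1] (mod L)" using cong_solve_coprime_int by blast
  hence "coprime w L" by (metis coprime_iff_invertible_int mult.commute)
  hence "jacobi_gauss_sum L a = of_int (jacobi w L) * jacobi_gauss_sum L (a * w)"
    using jacobi_gauss_sum_scale assms(1,2) by blast
  thus ?thesis
    using jacobi_inverse[OF assms(2) w] jacobi_gauss_sum_cong[OF w]
    by (simp add: gauss_c_eq_jacobi_gauss_sum)
next
  case False
  have "L \<noteq> 0" using assms(1) by simp
  then obtain p where p: "prime p" "p dvd a" "p dvd L" using not_coprime_primeE False by blast
  obtain u where u: "jacobi u L = -1" "[u = 1] (mod L div p)"
    using jacobi_minus_one_cong_1_exists assms p(1,3) .
  hence "coprime u L" using jacobi_eq_0_if_not_coprime[of u L] assms(1) by auto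
  from jacobi_gauss_sum_scale[OF assms(1,2) this, of a]
  have "jacobi_gauss_sum L a = - jacobi_gauss_sum L (a * u)" using u(1) by simp
  moreover have "[a * u = a] (mod L)"
  proof -
    have "L div p dvd u - 1" using u(2) by (simp add: cong_iff_dvd_diff)
    with p(2) have "p * (L div p) dvd a * (u - 1)" by (rule mult_dvd_mono)
    thus ?thesis using p(3) by (simp add: cong_iff_dvd_diff right_diff_distrib)
  qed
  ultimately have "jacobi_gauss_sum L a = 0"
    using jacobi_gauss_sum_cong by simp
  thus ?thesis using jacobi_eq_0_if_not_coprime False assms(1) by simp
qed

lemma zak_mult_periodic:
  fixes y z :: "int \<Rightarrow> complex" and L M v j k :: int
  assumes "L > 0" "coprime M L" "[M * v = 1] (mod L)"
    and y: "\<And>a b. [a = b] (mod M) \<Longrightarrow> y a = y b"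
    and z: "\<And>a b. [a = b] (mod L) \<Longrightarrow> z a = z b"
  shows "zak (\<lambda>n. y n * z n) L M j k
    = y k * unity_root L (- (v * j * k)) * (\<Sum>b\<in>{0..<L}. z b * unity_root L (v * j * b))"
proof -
  define g where "g b = z b * unity_root L (v * j * b)" for b
  have "g b = g b'" if "[b = b'] (mod L)" for b b'
    unfolding g_def using z[OF that] unity_root_cong[OF cong_scalar_left[OF that]] by simp
  note reindex = sum_residues_affine_reindex[OF assms(1,2) this]
  have phase: "unity_root L (r * j) = unity_root L (- (v * j * k)) * unity_root L (v * j * (k + r * M))"
    for r
  proof -
    have "[M * v * (j * r) = 1 * (j * r)] (mod L)" using cong_scalar_right[OF assms(3)] .
    hence "[r * j = - (v * j * k) + v * j * (k + r * M)] (mod L)"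
      by (simp add: algebra_simps cong_sym)
    thus ?thesis by (simp add: unity_root_cong unity_root_add[symmetric])
  qed
  have "y (k + r * M) * z (k + r * M) * exp (2 * pi * \<i> * of_int (r * j) / of_int L)
      = y k * unity_root L (- (v * j * k)) * g (k + r * M)" for r
  proof -
    have "y (k + r * M) = y k" by (rule y) (simp add: cong_iff_dvd_diff)
    moreover have "exp (2 * pi * \<i> * of_int (r * j) / of_int L) = unity_root L (r * j)"
      by (simp add: unity_root_def)
    ultimately show ?thesis unfolding phase g_def by (simp add: ac_simps)
  qed
  hence "zak (\<lambda>n. y n * z n) L M j k
      = y k * unity_root L (- (v * j * k)) * (\<Sum>r\<in>{0..<L}. g (k + r * M))"
    by (simp add: zak_def sum_distrib_left)
  also have "(\<Sum>r\<in>{0..<L}. g (k + r * M)) = (\<Sum>b\<in>{0..<L}. g b)"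
    by (rule reindex)
  finally show ?thesis by (simp add: g_def)
qed

theorem corollary5:
  fixes R1 R2 :: int
  assumes "R1 > 1" and "odd R1"
    and "R2 > 1" and "odd R2" and "squarefree R2"
    and "coprime R1 R2"
  shows "\<forall>j k. 0 \<le> j \<and> j < R2 \<and> 0 \<le> k \<and> k < R1 \<longrightarrow>
    zak (\<lambda>n. of_int (jacobi n (R1 * R2))) R2 R1 j k =
      gauss_c R2 * of_int (jacobi R1 R2)
      * exp (- 2 * pi * \<i> * of_int (inv_mod R1 R2 * j * k) / of_int R2)
      * of_int (jacobi j R2) * of_int (jacobi k R1)"
proof (intro allI impI)
  fix j k :: int
  define v where "v = inv_mod R1 R2"
  have v: "[R1 * v = 1] (mod R2)"
    unfolding v_def inv_mod_def using cong_solve_coprime_int[OF assms(6)] by (rule someI_ex)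
  have "zak (\<lambda>n. of_int (jacobi n (R1 * R2))) R2 R1 j k
      = zak (\<lambda>n. of_int (jacobi n R1) * of_int (jacobi n R2)) R2 R1 j k"
    using jacobi_mult_modulus[of R1 R2] assms(1,3) by simp
  also have "\<dots> = of_int (jacobi k R1) * unity_root R2 (- (v * j * k))
      * (\<Sum>b\<in>{0..<R2}. of_int (jacobi b R2) * unity_root R2 (v * j * b))"
    by (rule zak_mult_periodic) (use assms(3,6) v jacobi_cong in auto)
  also have "(\<Sum>b\<in>{0..<R2}. of_int (jacobi b R2) * unity_root R2 (v * j * b))
      = jacobi_gauss_sum R2 (v * j)"
    unfolding jacobi_gauss_sum_def ..
  also have "jacobi_gauss_sum R2 (v * j) = of_int (jacobi R1 R2 * jacobi j R2) * gauss_c R2"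
    using jacobi_gauss_sum_eq assms(3,4,5) jacobi_mult[OF assms(4)] jacobi_inverse[OF assms(4) v]
    by simp
  finally show "zak (\<lambda>n. of_int (jacobi n (R1 * R2))) R2 R1 j k =
      gauss_c R2 * of_int (jacobi R1 R2)
      * exp (- 2 * pi * \<i> * of_int (inv_mod R1 R2 * j * k) / of_int R2)
      * of_int (jacobi j R2) * of_int (jacobi k R1)"
    by (simp add: unity_root_def v_def ac_simps)
qed

end
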